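(* Let $M$ be a maximal ideal of a commutative semigroup $S$. The following are equivalent: (i) $M$ is a prime ideal; (ii) $\mathrm{Sep}\,M\neq\emptyset$; (iii) the factor semigroup $S/P_M$ is a two-element monoid with a zero.
   Context: A proper ideal $I$ of $S$ (i.e. $I\neq S$) is prime if $ab\in I$ implies $a\in I$ or $b\in I$. A proper ideal $M$ is maximal if for every ideal $A$ with $M\subseteq A\subseteq S$ we have $A=M$ or $A=S$. For $A\subseteq S$: $\mathrm{Id}\,A=\{x\in S: xA\subseteq A,\ Ax\subseteq A\}$ and $\mathrm{Sep}\,A=\mathrm{Id}\,A\cap\mathrm{Id}(S\setminus A)$. For $H\subseteq S$, $a\in S$: $H\dots a=\{(x,y)\in S\times S: xay\in H\}$ and $P_H=\{(a,b)\in S\times S: H\dots a=H\dots b\}$. *)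

theory Defs
  imports Main
begin

text \<open>The commutative semigroup S is the whole type 'a (class ab_semigroup_mult).
  Ideals of a semigroup are nonempty subsets I with SI and IS contained in I.\<close>

definition sg_ideal :: "'a::semigroup_mult set \<Rightarrow> bool" where
  "sg_ideal I \<longleftrightarrow> I \<noteq> {} \<and> (\<forall>s a. a \<in> I \<longrightarrow> s * a \<in> I \<and> a * s \<in> I)"

definition prime_ideal :: "'a::semigroup_mult set \<Rightarrow> bool" where
  "prime_ideal I \<longleftrightarrow> sg_ideal I \<and> I \<noteq> UNIV \<and>
     (\<forall>a b. a * b \<in> I \<longrightarrow> a \<in> I \<or> b \<in> I)"

definition maximal_ideal :: "'a::semigroup_mult set \<Rightarrow> bool" where
  "maximal_ideal M \<longleftrightarrow> sg_ideal M \<and> M \<noteq> UNIV \<and>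
     (\<forall>A. sg_ideal A \<and> M \<subseteq> A \<longrightarrow> A = M \<or> A = UNIV)"

definition Idl :: "'a::semigroup_mult set \<Rightarrow> 'a set" where
  "Idl A = {x. (\<forall>a\<in>A. x * a \<in> A \<and> a * x \<in> A)}"

definition Sep :: "'a::semigroup_mult set \<Rightarrow> 'a set" where
  "Sep A = Idl A \<inter> Idl (UNIV - A)"

definition ctx :: "'a::semigroup_mult set \<Rightarrow> 'a \<Rightarrow> ('a \<times> 'a) set" where
  "ctx H a = {(x, y). x * a * y \<in> H}"

definition P_rel :: "'a::semigroup_mult set \<Rightarrow> ('a \<times> 'a) set" where
  "P_rel H = {(a, b). ctx H a = ctx H b}"

definition qmult :: "('a::semigroup_mult \<times> 'a) set \<Rightarrow> 'a set \<Rightarrow> 'a set \<Rightarrow> 'a set" where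
  "qmult P X Y = (\<Union>x\<in>X. \<Union>y\<in>Y. P `` {x * y})"

definition two_elem_monoid_with_zero :: "('a::semigroup_mult \<times> 'a) set \<Rightarrow> bool" where
  "two_elem_monoid_with_zero P \<longleftrightarrow> card (UNIV // P) = 2 \<and>
     (\<exists>e\<in>UNIV // P. \<forall>C\<in>UNIV // P. qmult P e C = C \<and> qmult P C e = C) \<and>
     (\<exists>z\<in>UNIV // P. \<forall>C\<in>UNIV // P. qmult P z C = z \<and> qmult P C z = z)"

end

theory Submission
  imports Defs
begin

text \<open>If \<open>M\<close> is prime, \<open>x a y \<in> M\<close> iff one of the three factors lies in \<open>M\<close>, so the
  classes of \<open>P\<^sub>M\<close> are exactly \<open>M\<close> and its complement. For maximal \<open>M\<close> the elements \<open>b\<close> with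
  \<open>M\<dots>b = S \<times> S\<close> form an ideal containing \<open>M\<close>; when \<open>S/P\<^sub>M\<close> has two elements this ideal is
  \<open>M\<close>, and again the classes are \<open>M\<close> and its complement. In that quotient the class \<open>M\<close> is a
  zero, so an identity can only be the complement, and this happens iff the complement is
  closed under multiplication, i.e. iff \<open>M\<close> is prime. Finally, by maximality every element
  outside \<open>M\<close> lies in the principal ideal of any \<open>a \<notin> M\<close>; an element of \<open>Sep M\<close> therefore
  cannot exist if \<open>ab \<in> M\<close> for some \<open>a, b \<notin> M\<close>.\<close>

lemma sg_idealD:
  assumes "sg_ideal I" "a \<in> I"
  shows "s * a \<in> I" "a * s \<in> I"
  using assms unfolding sg_ideal_def by blast+

lemma prime_idealD:
  assumes "prime_ideal I" "a * b \<in> I"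
  shows "a \<in> I \<or> b \<in> I"
  using assms unfolding prime_ideal_def by blast

lemma ctx_eq_UNIV_if_mem:
  assumes "sg_ideal M" "a \<in> M"
  shows "ctx M a = UNIV"
  unfolding ctx_def using sg_idealD[OF assms(1)] assms(2) by fastforce

lemma sg_ideal_ctx_eq_UNIV:
  assumes "sg_ideal M"
  shows "sg_ideal {b. ctx M b = UNIV}"
  unfolding sg_ideal_def
proof (intro conjI allI impI)
  obtain m where "m \<in> M" using assms unfolding sg_ideal_def by blast
  then show "{b. ctx M b = UNIV} \<noteq> {}" using ctx_eq_UNIV_if_mem[OF assms] by blast
next
  fix s b assume "b \<in> {b. ctx M b = UNIV}"
  then have b: "x * b * y \<in> M" for x y unfolding ctx_def by auto
  have "x * (s * b) * y \<in> M" "x * (b * s) * y \<in> M" for x y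
    using b[of "x * s" y] b[of x "s * y"] by (simp_all add: mult.assoc)
  then show "s * b \<in> {b. ctx M b = UNIV}" "b * s \<in> {b. ctx M b = UNIV}"
    unfolding ctx_def by auto
qed

lemma P_rel_Image: "P_rel H `` {a} = {b. ctx H a = ctx H b}"
  unfolding P_rel_def by auto

lemma quotient_UNIV_eq_range: "UNIV // r = range (\<lambda>a. r `` {a})"
  unfolding quotient_def by auto

lemma prime_ideal_ctx:
  assumes "prime_ideal M"
  shows "ctx M a = (if a \<in> M then UNIV else {(x, y). x \<in> M \<or> y \<in> M})"
proof -
  have I: "sg_ideal M" using assms unfolding prime_ideal_def by blast
  have "x * a * y \<in> M \<longleftrightarrow> x \<in> M \<or> a \<in> M \<or> y \<in> M" for x y
    using prime_idealD[OF assms, of "x * a" y] prime_idealD[OF assms, of x a]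
      sg_idealD[OF I] by (metis mult.assoc)
  then show ?thesis unfolding ctx_def by auto
qed

lemma prime_ideal_P_rel_Image:
  assumes "prime_ideal M"
  shows "P_rel M `` {a} = (if a \<in> M then M else - M)"
proof -
  obtain z where "z \<notin> M" using assms unfolding prime_ideal_def by blast
  then have "{(x, y). x \<in> M \<or> y \<in> M} \<noteq> UNIV" by auto
  then show ?thesis unfolding P_rel_Image prime_ideal_ctx[OF assms] by auto
qed

lemma mem_P_rel_Image_self: "a \<in> P_rel H `` {a}"
  by (simp add: P_rel_Image)

lemma maximal_ideal_ctx_eq_UNIV_iff:
  assumes max: "maximal_ideal M" and "\<exists>b. ctx M b \<noteq> UNIV"
  shows "ctx M b = UNIV \<longleftrightarrow> b \<in> M"
proof -
  have I: "sg_ideal M" using max unfolding maximal_ideal_def by blast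
  have "{b. ctx M b = UNIV} \<noteq> UNIV" using assms(2) by blast
  moreover have "M \<subseteq> {b. ctx M b = UNIV}" using ctx_eq_UNIV_if_mem[OF I] by blast
  ultimately have "{b. ctx M b = UNIV} = M"
    using max sg_ideal_ctx_eq_UNIV[OF I] unfolding maximal_ideal_def by blast
  then show ?thesis by blast
qed

lemma maximal_ideal_P_rel_Image:
  assumes max: "maximal_ideal M" and two: "card (UNIV // P_rel M) = 2"
  shows "P_rel M `` {a} = (if a \<in> M then M else - M)"
proof -
  have I: "sg_ideal M" using max unfolding maximal_ideal_def by blast
  have "\<exists>b. ctx M b \<noteq> UNIV"
  proof (rule ccontr)
    assume "\<not> (\<exists>b. ctx M b \<noteq> UNIV)"
    then have "P_rel M `` {b} = UNIV" for b by (simp add: P_rel_Image)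
    then have "UNIV // P_rel M = {UNIV}" unfolding quotient_UNIV_eq_range by auto
    with two show False by simp
  qed
  note full_iff = maximal_ideal_ctx_eq_UNIV_iff[OF max this]
  have cls_mem: "P_rel M `` {a} = M" if "a \<in> M" for a
  proof -
    have "ctx M a = UNIV" using that full_iff by blast
    then have "P_rel M `` {a} = {b. ctx M b = UNIV}" unfolding P_rel_Image by auto
    with full_iff show ?thesis by blast
  qed
  obtain m where m: "m \<in> M" using I unfolding sg_ideal_def by blast
  have "P_rel M `` {c} = - M" if c: "c \<notin> M" for c
  proof
    show "P_rel M `` {c} \<subseteq> - M"
    proof
      fix b assume "b \<in> P_rel M `` {c}"
      then have "ctx M c = ctx M b" by (simp add: P_rel_Image)
      with c show "b \<in> - M" by (metis ComplI full_iff)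
    qed
    have distinct: "M \<noteq> P_rel M `` {c}" using c mem_P_rel_Image_self[of c M] by blast
    have "{M, P_rel M `` {c}} \<subseteq> UNIV // P_rel M"
      using cls_mem[OF m] unfolding quotient_UNIV_eq_range by auto
    moreover have "finite (UNIV // P_rel M)" using two card.infinite by fastforce
    moreover have "card {M, P_rel M `` {c}} = card (UNIV // P_rel M)"
      using two distinct by simp
    ultimately have Q: "UNIV // P_rel M = {M, P_rel M `` {c}}"
      by (metis card_subset_eq)
    show "- M \<subseteq> P_rel M `` {c}"
    proof
      fix d assume "d \<in> - M"
      then have "P_rel M `` {d} \<noteq> M" using mem_P_rel_Image_self[of d M] by blast
      moreover have "P_rel M `` {d} \<in> UNIV // P_rel M"
        unfolding quotient_UNIV_eq_range by blast
      ultimately have "P_rel M `` {d} = P_rel M `` {c}" using Q by simp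
      then show "d \<in> P_rel M `` {c}" using mem_P_rel_Image_self[of d M] by simp
    qed
  qed
  with cls_mem show ?thesis by simp
qed

lemma qmult_eq_if_const:
  assumes "X \<noteq> {}" "Y \<noteq> {}" "\<And>x y. x \<in> X \<Longrightarrow> y \<in> Y \<Longrightarrow> P `` {x * y} = K"
  shows "qmult P X Y = K"
  using assms unfolding qmult_def by fastforce

lemma Image_subset_qmult:
  assumes "x \<in> X" "y \<in> Y"
  shows "P `` {x * y} \<subseteq> qmult P X Y"
  using assms unfolding qmult_def by blast

lemma two_elem_monoid_with_zero_iff_prime_ideal:
  assumes I: "sg_ideal M" and nU: "M \<noteq> UNIV"
    and cls: "\<And>a. P_rel M `` {a} = (if a \<in> M then M else - M)"
  shows "two_elem_monoid_with_zero (P_rel M) \<longleftrightarrow> prime_ideal M"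
proof -
  let ?m = "qmult (P_rel M)"
  obtain m where m: "m \<in> M" using I unfolding sg_ideal_def by blast
  obtain z where z: "z \<notin> M" using nU by blast
  have ne: "M \<noteq> {}" "- M \<noteq> {}" "M \<noteq> - M" using m z by auto
  have Q: "UNIV // P_rel M = {M, - M}"
    unfolding quotient_UNIV_eq_range cls using m z by auto
  have card: "card (UNIV // P_rel M) = 2" unfolding Q using ne(3) by simp
  have zero: "?m M C = M" "?m C M = M" if "C \<in> {M, - M}" for C
    using that ne
    by (intro qmult_eq_if_const; auto simp: cls sg_idealD[OF I])+
  have nonmem_sq: "?m (- M) (- M) = - M"
    if "\<And>a b. a \<notin> M \<Longrightarrow> b \<notin> M \<Longrightarrow> a * b \<notin> M"
    using that ne by (intro qmult_eq_if_const; auto simp: cls)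
  show ?thesis
  proof
    assume "two_elem_monoid_with_zero (P_rel M)"
    then have "\<exists>e\<in>{M, - M}. \<forall>C\<in>{M, - M}. ?m e C = C \<and> ?m C e = C"
      unfolding two_elem_monoid_with_zero_def Q by (elim conjE)
    then obtain e where e: "e \<in> {M, - M}" and eid: "?m e (- M) = - M"
      by (elim bexE) simp
    have "e \<noteq> M" using eid zero(1)[of "- M"] ne(3) by auto
    with e eid have sq: "?m (- M) (- M) = - M" by simp
    have "a * b \<notin> M" if "a \<notin> M" "b \<notin> M" for a b
      using Image_subset_qmult[of a "- M" b "- M" "P_rel M"] that
        mem_P_rel_Image_self[of "a * b" M] unfolding sq by auto
    then show "prime_ideal M" unfolding prime_ideal_def using I nU by blast
  next
    assume "prime_ideal M"
    then have sq: "?m (- M) (- M) = - M" using nonmem_sq prime_idealD by blast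
    have "\<forall>C\<in>{M, - M}. ?m (- M) C = C \<and> ?m C (- M) = C"
      using zero sq by simp
    moreover have "\<forall>C\<in>{M, - M}. ?m M C = M \<and> ?m C M = M"
      using zero by simp
    ultimately show "two_elem_monoid_with_zero (P_rel M)"
      unfolding two_elem_monoid_with_zero_def Q using card[unfolded Q]
      by (intro conjI bexI[of _ "- M"] bexI[of _ M]) simp_all
  qed
qed

lemma prime_ideal_Sep_ne:
  assumes "prime_ideal M"
  shows "Sep M \<noteq> {}"
proof -
  have I: "sg_ideal M" using assms unfolding prime_ideal_def by blast
  obtain z where z: "z \<notin> M" using assms unfolding prime_ideal_def by blast
  have "z \<in> Idl M" unfolding Idl_def using sg_idealD[OF I] by blast
  moreover have "z \<in> Idl (UNIV - M)"
    unfolding Idl_def using prime_idealD[OF assms] z by blast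
  ultimately show ?thesis unfolding Sep_def by blast
qed

lemma sg_ideal_Un_principal:
  fixes M :: "'a::ab_semigroup_mult set"
  assumes "sg_ideal M"
  shows "sg_ideal (M \<union> insert a (range ((*) a)))"
  unfolding sg_ideal_def
proof (intro conjI allI impI)
  fix s j assume j: "j \<in> M \<union> insert a (range ((*) a))"
  have "j * s \<in> M \<union> insert a (range ((*) a))"
    using j sg_idealD[OF assms] by (auto simp: mult.assoc)
  then show "j * s \<in> M \<union> insert a (range ((*) a))"
    "s * j \<in> M \<union> insert a (range ((*) a))" by (simp_all add: mult.commute)
qed simp

lemma maximal_ideal_nonmem_in_principal:
  fixes M :: "'a::ab_semigroup_mult set"
  assumes "maximal_ideal M" "a \<notin> M" "x \<notin> M"
  shows "x = a \<or> (\<exists>s. x = a * s)"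
proof -
  have "M \<union> insert a (range ((*) a)) = UNIV"
    using assms sg_ideal_Un_principal unfolding maximal_ideal_def by blast
  with assms(3) show ?thesis by blast
qed

lemma maximal_ideal_prime_if_Sep_ne:
  fixes M :: "'a::ab_semigroup_mult set"
  assumes max: "maximal_ideal M" and "Sep M \<noteq> {}"
  shows "prime_ideal M"
proof -
  have I: "sg_ideal M" and nU: "M \<noteq> UNIV"
    using max unfolding maximal_ideal_def by blast+
  obtain x where "x \<in> Sep M" using assms(2) by blast
  then have sep: "\<And>b. b \<notin> M \<Longrightarrow> x * b \<notin> M"
    unfolding Sep_def Idl_def by auto
  have x: "x \<notin> M" using sep sg_idealD[OF I] nU by blast
  have "a \<in> M \<or> b \<in> M" if ab: "a * b \<in> M" for a b
  proof (rule ccontr)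
    assume "\<not> (a \<in> M \<or> b \<in> M)"
    then have a: "a \<notin> M" and b: "b \<notin> M" by auto
    from maximal_ideal_nonmem_in_principal[OF max a x]
    have "x * b \<in> M"
      using ab sg_idealD[OF I ab] by (auto simp: ac_simps)
    with sep[OF b] show False by contradiction
  qed
  then show ?thesis unfolding prime_ideal_def using I nU by blast
qed

theorem theorem2:
  fixes M :: "'a::ab_semigroup_mult set"
  assumes "maximal_ideal M"
  shows "(prime_ideal M \<longleftrightarrow> Sep M \<noteq> {}) \<and>
         (Sep M \<noteq> {} \<longleftrightarrow> two_elem_monoid_with_zero (P_rel M))"
proof -
  have I: "sg_ideal M" and nU: "M \<noteq> UNIV"
    using assms unfolding maximal_ideal_def by blast+
  have prime_Sep: "prime_ideal M \<longleftrightarrow> Sep M \<noteq> {}"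
    using prime_ideal_Sep_ne maximal_ideal_prime_if_Sep_ne[OF assms] by blast
  have "prime_ideal M \<longleftrightarrow> two_elem_monoid_with_zero (P_rel M)"
  proof
    assume "prime_ideal M"
    then show "two_elem_monoid_with_zero (P_rel M)"
      using two_elem_monoid_with_zero_iff_prime_ideal[OF I nU] prime_ideal_P_rel_Image by blast
  next
    assume two: "two_elem_monoid_with_zero (P_rel M)"
    then have "card (UNIV // P_rel M) = 2" unfolding two_elem_monoid_with_zero_def by blast
    with two show "prime_ideal M"
      using two_elem_monoid_with_zero_iff_prime_ideal[OF I nU] maximal_ideal_P_rel_Image[OF assms]
      by blast
  qed
  with prime_Sep show ?thesis by blast
qed

end
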